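(* Let $H$ be a monoid. Then: (a) $1s\Rightarrow 0s$, $3s\Rightarrow 0s$, $2s\Rightarrow 1s$, $2s\Rightarrow 3s$, $2s\Rightarrow 5s$, $3s\Rightarrow 6s$; (b) $1r\Rightarrow 0r$, $3r\Rightarrow 0r$, $2r\Rightarrow 1r$, $2r\Rightarrow 3r$, $2r\Rightarrow 5r$, $3r\Rightarrow 6r$, $5r\Rightarrow 4r$, $4r\Rightarrow 4'r$, $5r\Rightarrow 5'r$; (c) $kr\Rightarrow ks$ for each $k\in\{0,1,2,3,4,5,6\}$.
   Context: A monoid means a commutative cancellative monoid (written multiplicatively); $H^{\ast}$ is its unit group, $\mathbb{N}=\{1,2,\dots\}$, $\mathbb{N}_0=\{0,1,2,\dots\}$. $a\sim b$ means $a=ub$ with $u\in H^{\ast}$. Elements are relatively prime ($a\perp b$) if all their common divisors are units. $\mathrm{Sqf}\,H$: elements not of the form $b^2c$ with $b\notin H^{\ast}$. $\mathrm{Gpr}\,H$: elements $r$ such that $r\mid b^n$ ($n\in\mathbb{N}$) implies $r\mid b$. Let $S$ stand for $\mathrm{Sqf}\,H$ (conditions with suffix s) or $\mathrm{Gpr}\,H$ (suffix r). For every $a\in H$: (0) there are $n\in\mathbb{N}$, $s_1,\dots,s_n\in S$ with $a=s_1\cdots s_n$; (1) there are $n\in\mathbb{N}$, $s_1,\dots,s_n\in S$ with $s_i\perp s_j$ for $i\ne j$ and $a=s_1s_2^2s_3^3\cdots s_n^n$; (2) there are $n\in\mathbb{N}$, $s_1,\dots,s_n\in S$ with $s_i\mid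 s_{i+1}$ ($i=1,\dots,n-1$) and $a=s_1\cdots s_n$; (3) there are $n\in\mathbb{N}_0$, $s_0,\dots,s_n\in S$ with $a=s_0s_1^2s_2^{2^2}\cdots s_n^{2^n}$; (4) there are $b\in H$, $c\in S$ with $b\perp c$, $a=bc$, and some $d\in S$ with $d^2\mid b$ and $b\mid d^n$ for some $n\in\mathbb{N}$; (4') there are $b\in H$, $c\in S$ with $b\perp c$, $a=bc$, and for every $d\in S$, $d\mid b$ implies $d^2\mid b$; (5) there are $b\in H$, $c\in S$ with $a=bc$ and $a\mid c^n$ for some $n\in\mathbb{N}$; (5') there are $b\in H$, $c\in S$ with $a=bc$ and for every $d\in S$, $d\mid a$ implies $d\mid c$; (6) there are $b\in H$, $c\in S$ with $a=b^2c$. Condition $ks$ (resp. $kr$) is condition $(k)$ with $S=\mathrm{Sqf}\,H$ (resp. $S=\mathrm{Gpr}\,H$). *)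

theory Defs
  imports Main
begin

text \<open>The monoid H is the type 'a of class comm_monoid_mult; cancellativity is an
explicit hypothesis of the theorem. Divisibility is the library's dvd.\<close>

definition munit :: "'a::comm_monoid_mult \<Rightarrow> bool" where
  "munit u \<longleftrightarrow> u dvd 1"

definition relprime :: "'a::comm_monoid_mult \<Rightarrow> 'a \<Rightarrow> bool" where
  "relprime a b \<longleftrightarrow> (\<forall>d. d dvd a \<longrightarrow> d dvd b \<longrightarrow> munit d)"

definition Sqf :: "'a::comm_monoid_mult set" where
  "Sqf = {a. \<not> (\<exists>b c. \<not> munit b \<and> a = b^2 * c)}"

definition Gpr :: "'a::comm_monoid_mult set" where
  "Gpr = {r. \<forall>b (n::nat). n \<ge> 1 \<longrightarrow> r dvd b^n \<longrightarrow> r dvd b}"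

definition C0 :: "'a::comm_monoid_mult set \<Rightarrow> bool" where
  "C0 S \<longleftrightarrow> (\<forall>a. \<exists>(n::nat) s. n \<ge> 1 \<and> (\<forall>i\<in>{1..n}. s i \<in> S) \<and>
      a = (\<Prod>i=1..n. s i))"

definition C1 :: "'a::comm_monoid_mult set \<Rightarrow> bool" where
  "C1 S \<longleftrightarrow> (\<forall>a. \<exists>(n::nat) s. n \<ge> 1 \<and> (\<forall>i\<in>{1..n}. s i \<in> S) \<and>
      (\<forall>i\<in>{1..n}. \<forall>j\<in>{1..n}. i \<noteq> j \<longrightarrow> relprime (s i) (s j)) \<and>
      a = (\<Prod>i=1..n. s i ^ i))"

definition C2 :: "'a::comm_monoid_mult set \<Rightarrow> bool" where
  "C2 S \<longleftrightarrow> (\<forall>a. \<exists>(n::nat) s. n \<ge> 1 \<and> (\<forall>i\<in>{1..n}. s i \<in> S) \<and>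
      (\<forall>i\<in>{1..<n}. s i dvd s (Suc i)) \<and>
      a = (\<Prod>i=1..n. s i))"

definition C3 :: "'a::comm_monoid_mult set \<Rightarrow> bool" where
  "C3 S \<longleftrightarrow> (\<forall>a. \<exists>(n::nat) s. (\<forall>i\<in>{0..n}. s i \<in> S) \<and>
      a = (\<Prod>i=0..n. s i ^ (2^i)))"

definition C4 :: "'a::comm_monoid_mult set \<Rightarrow> bool" where
  "C4 S \<longleftrightarrow> (\<forall>a. \<exists>b c. c \<in> S \<and> relprime b c \<and> a = b * c \<and>
      (\<exists>d\<in>S. d^2 dvd b \<and> (\<exists>n::nat. n \<ge> 1 \<and> b dvd d^n)))"

definition C4' :: "'a::comm_monoid_mult set \<Rightarrow> bool" where
  "C4' S \<longleftrightarrow> (\<forall>a. \<exists>b c. c \<in> S \<and> relprime b c \<and> a = b * c \<and>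
      (\<forall>d\<in>S. d dvd b \<longrightarrow> d^2 dvd b))"

definition C5 :: "'a::comm_monoid_mult set \<Rightarrow> bool" where
  "C5 S \<longleftrightarrow> (\<forall>a. \<exists>b c. c \<in> S \<and> a = b * c \<and> (\<exists>n::nat. n \<ge> 1 \<and> a dvd c^n))"

definition C5' :: "'a::comm_monoid_mult set \<Rightarrow> bool" where
  "C5' S \<longleftrightarrow> (\<forall>a. \<exists>b c. c \<in> S \<and> a = b * c \<and> (\<forall>d\<in>S. d dvd a \<longrightarrow> d dvd c))"

definition C6 :: "'a::comm_monoid_mult set \<Rightarrow> bool" where
  "C6 S \<longleftrightarrow> (\<forall>a. \<exists>b c. c \<in> S \<and> a = b^2 * c)"

end

(*
  Sqf H, and under cancellativity also Gpr H \<subseteq> Sqf H, is a set S of squarefree elements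
  closed under divisors. For such S, a chain s_1 | s_2 | ... | s_n in S has successive
  quotients t_i = s_(n-i+1) / s_(n-i) (with s_0 = 1) satisfying s_1 ... s_n = t_1 t_2^2 ... t_n^n
  and t_1 ... t_n = s_n; they are pairwise coprime because a common factor e of two of them
  has e^2 | s_n. This gives (1) from (2); expanding every exponent i in binary gives (3), since
  each partial product of the t_i divides s_n and hence lies in S; and (5) holds with c = s_n.
  The Gpr-specific implications follow from r | b^n \<Longrightarrow> r | b, and (k)r \<Longrightarrow> (k)s from
  Gpr H \<subseteq> Sqf H because every condition is monotone in S.
*)

theory Submission
  imports Defs
begin

(* The library versions le_imp_power_dvd and prod_power_distrib need comm_semiring_1. *)

lemma le_imp_power_dvd':
  fixes a :: "'a::comm_monoid_mult"
  shows "m \<le> n \<Longrightarrow> a ^ m dvd a ^ n"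
  by (metis le_add_diff_inverse power_add dvd_triv_left)

lemma prod_power_distrib':
  fixes f :: "'b \<Rightarrow> 'a::comm_monoid_mult"
  shows "prod f A ^ n = (\<Prod>x\<in>A. f x ^ n)"
  by (induction A rule: infinite_finite_induct) (simp_all add: power_mult_distrib)

lemma relprime_commute: "relprime a b \<longleftrightarrow> relprime b a"
  unfolding relprime_def by blast

lemma Sqf_square_dvd_imp_munit: "x \<in> Sqf \<Longrightarrow> e ^ 2 dvd x \<Longrightarrow> munit e"
  unfolding Sqf_def dvd_def by auto

lemma Sqf_dvd:
  assumes "x \<in> Sqf" and "y dvd x"
  shows "y \<in> Sqf"
  unfolding Sqf_def
proof clarify
  fix b c assume "\<not> munit b" and y: "y = b ^ 2 * c"
  obtain k where "x = y * k" using assms(2) ..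
  then have "x = b ^ 2 * (c * k)" using y by (simp add: ac_simps)
  with assms(1) \<open>\<not> munit b\<close> show False unfolding Sqf_def by blast
qed

lemma Gpr_dvd_powerD: "r \<in> Gpr \<Longrightarrow> r dvd b ^ n \<Longrightarrow> n \<ge> 1 \<Longrightarrow> r dvd b"
  unfolding Gpr_def by blast

lemma C0_mono: "A \<subseteq> B \<Longrightarrow> C0 A \<Longrightarrow> C0 B"
  unfolding C0_def by (elim all_forward ex_forward conj_forward) auto

lemma C1_mono: "A \<subseteq> B \<Longrightarrow> C1 A \<Longrightarrow> C1 B"
  unfolding C1_def by (elim all_forward ex_forward conj_forward) auto

lemma C2_mono: "A \<subseteq> B \<Longrightarrow> C2 A \<Longrightarrow> C2 B"
  unfolding C2_def by (elim all_forward ex_forward conj_forward) auto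

lemma C3_mono: "A \<subseteq> B \<Longrightarrow> C3 A \<Longrightarrow> C3 B"
  unfolding C3_def by (elim all_forward ex_forward conj_forward) auto

lemma C4_mono: "A \<subseteq> B \<Longrightarrow> C4 A \<Longrightarrow> C4 B"
  unfolding C4_def by (elim all_forward ex_forward conj_forward) auto

lemma C5_mono: "A \<subseteq> B \<Longrightarrow> C5 A \<Longrightarrow> C5 B"
  unfolding C5_def by (elim all_forward ex_forward conj_forward) auto

lemma C6_mono: "A \<subseteq> B \<Longrightarrow> C6 A \<Longrightarrow> C6 B"
  unfolding C6_def by (elim all_forward ex_forward conj_forward) auto

definition products :: "'a::comm_monoid_mult set \<Rightarrow> 'a set" where
  "products S = {\<Prod>i=1..n. s i | (n::nat) s. n \<ge> 1 \<and> (\<forall>i\<in>{1..n}. s i \<in> S)}"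

lemma C0_iff_products: "C0 S \<longleftrightarrow> (\<forall>a. a \<in> products S)"
  unfolding C0_def products_def by blast

lemma mem_products: "s \<in> S \<Longrightarrow> s \<in> products S"
  unfolding products_def by (rule CollectI, rule exI[of _ 1], rule exI[of _ "\<lambda>_. s"]) simp

lemma products_mult:
  assumes "a \<in> products S" and "b \<in> products S"
  shows "a * b \<in> products S"
proof -
  obtain n :: nat and s where s: "n \<ge> 1" "\<forall>i\<in>{1..n}. s i \<in> S" "a = (\<Prod>i=1..n. s i)"
    using assms(1) unfolding products_def by blast
  obtain m :: nat and t where t: "m \<ge> 1" "\<forall>i\<in>{1..m}. t i \<in> S" "b = (\<Prod>i=1..m. t i)"
    using assms(2) unfolding products_def by blast
  define u where "u i = (if i \<le> n then s i else t (i - n))" for i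
  have "(\<Prod>i=1..n + m. u i) = (\<Prod>i=1..n. u i) * (\<Prod>i=n + 1..n + m. u i)"
    using s(1) by (intro prod.ub_add_nat) simp
  also have "(\<Prod>i=n + 1..n + m. u i) = (\<Prod>i=1..m. u (i + n))"
    using prod.shift_bounds_cl_nat_ivl[of u 1 n m] by (simp add: add.commute)
  finally have "a * b = (\<Prod>i=1..n + m. u i)"
    using s(3) t(3) by (simp add: u_def)
  moreover have "\<forall>i\<in>{1..n + m}. u i \<in> S"
    using s(2) by (auto simp: u_def intro!: t(2)[rule_format])
  ultimately show ?thesis
    using s(1) unfolding products_def by fastforce
qed

lemma power_mem_products: "k \<ge> 1 \<Longrightarrow> a \<in> products S \<Longrightarrow> a ^ k \<in> products S"
  by (induction k rule: nat_induct_at_least) (simp_all add: products_mult)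

lemma prod_mem_products:
  "finite A \<Longrightarrow> A \<noteq> {} \<Longrightarrow> (\<forall>i\<in>A. f i \<in> products S) \<Longrightarrow> prod f A \<in> products S"
  by (induction A rule: finite_ne_induct) (simp_all add: products_mult)

lemma C1_imp_C0:
  fixes S :: "'a::comm_monoid_mult set"
  assumes "C1 S"
  shows "C0 S"
  unfolding C0_iff_products
proof
  fix a :: 'a
  obtain n s where "n \<ge> 1" "\<forall>i\<in>{1..n}. s i \<in> S" "a = (\<Prod>i=1..n. s i ^ i)"
    using assms unfolding C1_def by blast
  then show "a \<in> products S"
    by (auto intro!: prod_mem_products power_mem_products[OF _ mem_products])
qed

lemma C3_imp_C0:
  fixes S :: "'a::comm_monoid_mult set"
  assumes "C3 S"
  shows "C0 S"
  unfolding C0_iff_products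
proof
  fix a :: 'a
  obtain n s where "\<forall>i\<in>{0..n}. s i \<in> S" "a = (\<Prod>i=0..n. s i ^ 2 ^ i)"
    using assms unfolding C3_def by blast
  then show "a \<in> products S"
    by (auto intro!: prod_mem_products power_mem_products[OF _ mem_products])
qed

lemma C3_imp_C6:
  fixes S :: "'a::comm_monoid_mult set"
  assumes "C3 S"
  shows "C6 S"
  unfolding C6_def
proof
  fix a :: 'a
  obtain n s where s: "\<forall>i\<in>{0..n}. s i \<in> S" "a = (\<Prod>i=0..n. s i ^ 2 ^ i)"
    using assms unfolding C3_def by blast
  have "(\<Prod>i=1..n. s i ^ 2 ^ i) = (\<Prod>i=1..n. (s i ^ 2 ^ (i - 1)) ^ 2)"
    by (intro prod.cong refl) (simp flip: power_mult add: power_Suc2[symmetric])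
  also have "\<dots> = (\<Prod>i=1..n. s i ^ 2 ^ (i - 1)) ^ 2"
    by (simp add: prod_power_distrib')
  finally have "a = (\<Prod>i=1..n. s i ^ 2 ^ (i - 1)) ^ 2 * s 0"
    using s(2) by (simp add: prod.atLeast_Suc_atMost mult.commute)
  moreover have "s 0 \<in> S"
    using s(1) by simp
  ultimately show "\<exists>b c. c \<in> S \<and> a = b ^ 2 * c"
    by blast
qed

lemma nat_eq_sum_bits:
  fixes i :: nat
  assumes "i < 2 ^ m"
  shows "i = (\<Sum>k<m. of_bool (bit i k) * 2 ^ k)"
proof -
  have "i = take_bit m i" using assms by (simp add: take_bit_nat_eq_self)
  also have "\<dots> = (\<Sum>k<m. of_bool (bit i k) * 2 ^ k)"
    by (simp add: take_bit_sum push_bit_eq_mult atLeast0LessThan)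
  finally show ?thesis .
qed

lemma prod_power_eq_prod_bit_powers:
  fixes t :: "nat \<Rightarrow> 'a::comm_monoid_mult"
  assumes "finite A" and "\<forall>i\<in>A. i < 2 ^ m"
  shows "(\<Prod>i\<in>A. t i ^ i) = (\<Prod>k<m. (\<Prod>i\<in>{i\<in>A. bit i k}. t i) ^ 2 ^ k)"
proof -
  have "t i ^ i = (\<Prod>k<m. (if bit i k then t i else 1) ^ 2 ^ k)" if "i \<in> A" for i
  proof -
    have "t i ^ i = (\<Prod>k<m. t i ^ (of_bool (bit i k) * 2 ^ k))"
      using nat_eq_sum_bits[of i m] assms(2) that by (metis power_sum)
    then show ?thesis by (auto intro!: prod.cong)
  qed
  then have "(\<Prod>i\<in>A. t i ^ i) = (\<Prod>i\<in>A. \<Prod>k<m. (if bit i k then t i else 1) ^ 2 ^ k)"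
    by simp
  also have "\<dots> = (\<Prod>k<m. (\<Prod>i\<in>A. if bit i k then t i else 1) ^ 2 ^ k)"
    by (subst prod.swap) (simp only: prod_power_distrib')
  also have "\<dots> = (\<Prod>k<m. (\<Prod>i\<in>{i\<in>A. bit i k}. t i) ^ 2 ^ k)"
    using assms(1) by (simp add: prod.inter_filter)
  finally show ?thesis .
qed

lemma prod_atLeast1_atMost_Suc_shift:
  "(\<Prod>i=1..Suc n. f i) = f 1 * (\<Prod>i=1..n. f (Suc i))"
  by (simp add: prod.atLeast_Suc_atMost prod.shift_bounds_cl_Suc_ivl del: prod.cl_ivl_Suc)

lemma pairwise_relprime_prepend:
  assumes "\<forall>i\<in>{1..n}. \<forall>j\<in>{1..n}. i \<noteq> j \<longrightarrow> relprime (t i) (t j)"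
    and "\<forall>k\<in>{1..n}. relprime u (t k)"
  defines "t' \<equiv> \<lambda>i. if i = 1 then u else t (i - 1)"
  shows "\<forall>i\<in>{1..Suc n}. \<forall>j\<in>{1..Suc n}. i \<noteq> j \<longrightarrow> relprime (t' i) (t' j)"
proof (intro ballI impI)
  fix i j assume i: "i \<in> {1..Suc n}" and j: "j \<in> {1..Suc n}" and "i \<noteq> j"
  have pred: "k - 1 \<in> {1..n}" if "k \<in> {1..Suc n}" and "k \<noteq> 1" for k
    using that by auto
  consider "i = 1" | "j = 1" | "i \<noteq> 1" "j \<noteq> 1" by blast
  then show "relprime (t' i) (t' j)"
  proof cases
    case 1
    then show ?thesis using assms(2) pred[OF j] \<open>i \<noteq> j\<close> by (simp add: t'_def)
  next
    case 2
    then show ?thesis using assms(2) pred[OF i] \<open>i \<noteq> j\<close> by (simp add: t'_def relprime_commute)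
  next
    case 3
    then show ?thesis using assms(1) pred[OF i] pred[OF j] \<open>i \<noteq> j\<close> by (auto simp: t'_def)
  qed
qed

locale divisor_closed_squarefree =
  fixes S :: "'a::comm_monoid_mult set"
  assumes subset_Sqf: "S \<subseteq> Sqf"
    and dvd_closed: "x \<in> S \<Longrightarrow> y dvd x \<Longrightarrow> y \<in> S"
begin

lemma chain_normal_form:
  assumes "n \<ge> 1" and "\<forall>i\<in>{1..n}. s i \<in> S" and "\<forall>i\<in>{1..<n}. s i dvd s (Suc i)"
  shows "\<exists>t. (\<forall>i\<in>{1..n}. t i \<in> S) \<and>
    (\<forall>i\<in>{1..n}. \<forall>j\<in>{1..n}. i \<noteq> j \<longrightarrow> relprime (t i) (t j)) \<and>
    (\<Prod>i=1..n. t i ^ i) = (\<Prod>i=1..n. s i) \<and> (\<Prod>i=1..n. t i) = s n"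
  using assms
proof (induction n rule: nat_induct_at_least)
  case base
  then show ?case by (intro exI[of _ s]) auto
next
  case (Suc n)
  obtain t where t_mem: "\<forall>i\<in>{1..n}. t i \<in> S"
    and t_relprime: "\<forall>i\<in>{1..n}. \<forall>j\<in>{1..n}. i \<noteq> j \<longrightarrow> relprime (t i) (t j)"
    and t_prod_power: "(\<Prod>i=1..n. t i ^ i) = (\<Prod>i=1..n. s i)"
    and t_prod: "(\<Prod>i=1..n. t i) = s n"
    using Suc by auto
  have "s n dvd s (Suc n)"
    using Suc by simp
  then obtain u where u: "s (Suc n) = s n * u" ..
  have s_Suc: "s (Suc n) \<in> S"
    using Suc.prems by auto
  have "u \<in> S"
    using dvd_closed[OF s_Suc] u by simp
  have u_relprime: "relprime u (t k)" if "k \<in> {1..n}" for k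
    unfolding relprime_def
  proof clarify
    fix e assume "e dvd u" and "e dvd t k"
    have "t k dvd s n"
      using prod_dvd_prod_subset[of "{1..n}" "{k}" t] that t_prod by simp
    then have "e * e dvd s n * u"
      using \<open>e dvd u\<close> \<open>e dvd t k\<close> by (blast intro: mult_dvd_mono dvd_trans)
    then have "e ^ 2 dvd s (Suc n)"
      by (simp add: u power2_eq_square)
    then show "munit e"
      using s_Suc subset_Sqf Sqf_square_dvd_imp_munit by blast
  qed
  define t' where "t' i = (if i = 1 then u else t (i - 1))" for i
  have "(\<Prod>i=1..Suc n. t' i ^ i) = u * (\<Prod>i=1..n. t i ^ Suc i)"
    unfolding prod_atLeast1_atMost_Suc_shift by (simp add: t'_def)
  also have "\<dots> = (s n * u) * (\<Prod>i=1..n. t i ^ i)"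
    using t_prod by (simp add: prod.distrib ac_simps)
  also have "\<dots> = (\<Prod>i=1..Suc n. s i)"
    using t_prod_power u by (simp add: mult.commute)
  finally have "(\<Prod>i=1..Suc n. t' i ^ i) = (\<Prod>i=1..Suc n. s i)" .
  moreover have "(\<Prod>i=1..Suc n. t' i) = s (Suc n)"
    unfolding prod_atLeast1_atMost_Suc_shift using t_prod u by (simp add: t'_def mult.commute)
  moreover have "\<forall>i\<in>{1..Suc n}. t' i \<in> S"
    using \<open>u \<in> S\<close> by (auto simp: t'_def intro!: t_mem[rule_format])
  moreover have "\<forall>i\<in>{1..Suc n}. \<forall>j\<in>{1..Suc n}. i \<noteq> j \<longrightarrow> relprime (t' i) (t' j)"
    using pairwise_relprime_prepend[OF t_relprime] u_relprime unfolding t'_def by blast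
  ultimately show ?case by blast
qed

lemma C2_imp_normal_form:
  assumes "C2 S"
  obtains n t where "n \<ge> 1" and "\<forall>i\<in>{1..n}. t i \<in> S"
    and "\<forall>i\<in>{1..n}. \<forall>j\<in>{1..n}. i \<noteq> j \<longrightarrow> relprime (t i) (t j)"
    and "a = (\<Prod>i=1..n. t i ^ i)" and "(\<Prod>i=1..n. t i) \<in> S"
proof -
  obtain n s where "n \<ge> 1" and s: "\<forall>i\<in>{1..n}. s i \<in> S" "\<forall>i\<in>{1..<n}. s i dvd s (Suc i)"
    and a: "a = (\<Prod>i=1..n. s i)"
    using assms unfolding C2_def by blast
  moreover have "s n \<in> S"
    using s(1) \<open>n \<ge> 1\<close> by simp
  ultimately show ?thesis
    using chain_normal_form[OF \<open>n \<ge> 1\<close> s] that by auto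
qed

lemma C2_imp_C1:
  assumes "C2 S"
  shows "C1 S"
  unfolding C1_def
proof
  fix a :: 'a
  obtain n t where "n \<ge> 1" and "\<forall>i\<in>{1..n}. t i \<in> S"
    and "\<forall>i\<in>{1..n}. \<forall>j\<in>{1..n}. i \<noteq> j \<longrightarrow> relprime (t i) (t j)"
    and "a = (\<Prod>i=1..n. t i ^ i)"
    using C2_imp_normal_form[OF assms] .
  then show "\<exists>n t. n \<ge> 1 \<and> (\<forall>i\<in>{1..n}. t i \<in> S) \<and>
      (\<forall>i\<in>{1..n}. \<forall>j\<in>{1..n}. i \<noteq> j \<longrightarrow> relprime (t i) (t j)) \<and> a = (\<Prod>i=1..n. t i ^ i)"
    by blast
qed

lemma C2_imp_C3:
  assumes "C2 S"
  shows "C3 S"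
  unfolding C3_def
proof
  fix a :: 'a
  obtain n t where "n \<ge> 1" and a: "a = (\<Prod>i=1..n. t i ^ i)" and prod_S: "(\<Prod>i=1..n. t i) \<in> S"
    using C2_imp_normal_form[OF assms] .
  define r where "r k = (\<Prod>i\<in>{i\<in>{1..n}. bit i k}. t i)" for k
  have "n < 2 ^ Suc n"
    by (rule less_trans[OF lessI less_exp])
  then have "\<forall>i\<in>{1..n}. i < 2 ^ Suc n"
    by auto
  then have "a = (\<Prod>k<Suc n. r k ^ 2 ^ k)"
    unfolding a r_def by (intro prod_power_eq_prod_bit_powers) auto
  moreover have "r k \<in> S" for k
    unfolding r_def by (rule dvd_closed[OF prod_S], rule prod_dvd_prod_subset) auto
  ultimately show "\<exists>n r. (\<forall>i\<in>{0..n}. r i \<in> S) \<and> a = (\<Prod>i=0..n. r i ^ 2 ^ i)"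
    by (metis atLeast0AtMost lessThan_Suc_atMost)
qed

lemma C2_imp_C5:
  assumes "C2 S"
  shows "C5 S"
  unfolding C5_def
proof
  fix a :: 'a
  obtain n t where "n \<ge> 1" and a: "a = (\<Prod>i=1..n. t i ^ i)" and prod_S: "(\<Prod>i=1..n. t i) \<in> S"
    using C2_imp_normal_form[OF assms] .
  have "a = (\<Prod>i=1..n. t i ^ (i - 1)) * (\<Prod>i=1..n. t i)"
    unfolding a prod.distrib[symmetric] by (intro prod.cong) (auto simp flip: power_Suc2)
  moreover have "a dvd (\<Prod>i=1..n. t i) ^ n"
    unfolding a prod_power_distrib' by (intro prod_dvd_prod le_imp_power_dvd') simp
  ultimately show "\<exists>b c. c \<in> S \<and> a = b * c \<and> (\<exists>n. n \<ge> 1 \<and> a dvd c ^ n)"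
    using prod_S \<open>n \<ge> 1\<close> by blast
qed

end

lemma divisor_closed_squarefree_Sqf: "divisor_closed_squarefree Sqf"
  by unfold_locales (auto intro: Sqf_dvd)

lemma Gpr_C4_imp_C4':
  assumes "C4 (Gpr :: 'a::comm_monoid_mult set)"
  shows "C4' (Gpr :: 'a set)"
  unfolding C4'_def
proof
  fix a :: 'a
  obtain b c where bc: "c \<in> Gpr" "relprime b c" "a = b * c"
    and "\<exists>d\<in>Gpr. d ^ 2 dvd b \<and> (\<exists>n::nat. n \<ge> 1 \<and> b dvd d ^ n)"
    using assms unfolding C4_def by meson
  then obtain d and n :: nat where "d ^ 2 dvd b" "n \<ge> 1" "b dvd d ^ n"
    by blast
  have "\<forall>e\<in>Gpr. e dvd b \<longrightarrow> e ^ 2 dvd b"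
  proof clarify
    fix e assume "e \<in> Gpr" "e dvd b"
    then have "e dvd d"
      using Gpr_dvd_powerD[OF _ dvd_trans[OF \<open>e dvd b\<close> \<open>b dvd d ^ n\<close>] \<open>n \<ge> 1\<close>] by blast
    then have "e ^ 2 dvd d ^ 2"
      by (simp add: power2_eq_square mult_dvd_mono)
    then show "e ^ 2 dvd b"
      using \<open>d ^ 2 dvd b\<close> by (rule dvd_trans)
  qed
  with bc show "\<exists>b c. c \<in> Gpr \<and> relprime b c \<and> a = b * c \<and> (\<forall>d\<in>Gpr. d dvd b \<longrightarrow> d ^ 2 dvd b)"
    by blast
qed

lemma Gpr_C5_imp_C5':
  assumes "C5 (Gpr :: 'a::comm_monoid_mult set)"
  shows "C5' (Gpr :: 'a set)"
  unfolding C5'_def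
proof
  fix a :: 'a
  obtain b c n where "c \<in> Gpr" "a = b * c" "n \<ge> 1" "a dvd c ^ n"
    using assms unfolding C5_def by meson
  moreover have "d dvd c" if "d \<in> Gpr" and "d dvd a" for d
    using Gpr_dvd_powerD[OF that(1) dvd_trans[OF that(2) \<open>a dvd c ^ n\<close>] \<open>n \<ge> 1\<close>] .
  ultimately show "\<exists>b c. c \<in> Gpr \<and> a = b * c \<and> (\<forall>d\<in>Gpr. d dvd a \<longrightarrow> d dvd c)"
    by blast
qed

context
  assumes mult_right_cancel: "\<forall>a b c :: 'a::comm_monoid_mult. a * c = b * c \<longrightarrow> a = b"
begin

lemma Gpr_imp_Sqf:
  assumes "(x::'a) \<in> Gpr"
  shows "x \<in> Sqf"
  unfolding Sqf_def
proof clarify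
  fix b c assume "\<not> munit b" and x: "x = b ^ 2 * c"
  have "(b * c) ^ 2 = x * c"
    using x by (simp add: power2_eq_square ac_simps)
  then have "x dvd (b * c) ^ 2"
    by simp
  then have "x dvd b * c"
    using Gpr_dvd_powerD[OF assms] by simp
  then obtain k where bc: "b * c = x * k" ..
  have "(b * k) * (b * c) = x * k"
    using x by (simp add: power2_eq_square ac_simps)
  also have "\<dots> = 1 * (b * c)"
    by (simp add: bc)
  finally have "b * k = 1"
    by (rule mult_right_cancel[rule_format])
  with \<open>\<not> munit b\<close> show False
    unfolding munit_def by (metis dvdI)
qed

lemma Gpr_dvd:
  assumes "(x::'a) \<in> Gpr" and "y dvd x"
  shows "y \<in> Gpr"
  unfolding Gpr_def
proof clarify
  fix b :: 'a and n :: nat assume n: "n \<ge> 1" and "y dvd b ^ n"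
  obtain z where x: "x = y * z" using \<open>y dvd x\<close> ..
  have "x dvd b ^ n * z"
    unfolding x using \<open>y dvd b ^ n\<close> by (rule mult_dvd_mono) simp
  also have "b ^ n * z dvd (b * z) ^ n"
    unfolding power_mult_distrib using le_imp_power_dvd'[OF n, of z] by (simp add: mult_dvd_mono)
  finally have "x dvd b * z"
    by (rule Gpr_dvd_powerD[OF assms(1) _ n])
  then obtain k where bz: "b * z = x * k" ..
  have "b * z = (y * k) * z"
    unfolding bz x by (simp add: ac_simps)
  then have "b = y * k"
    by (rule mult_right_cancel[rule_format])
  then show "y dvd b" ..
qed

lemma divisor_closed_squarefree_Gpr: "divisor_closed_squarefree (Gpr :: 'a set)"
  by unfold_locales (auto intro: Gpr_imp_Sqf Gpr_dvd)

lemma Gpr_C5_imp_C4: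
  assumes "C5 (Gpr :: 'a set)"
  shows "C4 (Gpr :: 'a set)"
  unfolding C4_def
proof
  fix a :: 'a
  obtain b c n where c: "c \<in> Gpr" and a: "a = b * c" and "n \<ge> 1" and "a dvd c ^ n"
    using assms unfolding C5_def by meson
  \<comment> \<open>Applying (5) to the cofactor b as well yields d with d | b | d^m; moving the factor d
    of c over to b leaves a rest c' of c that is coprime to b d.\<close>
  obtain b' d m where d: "d \<in> Gpr" and "b = b' * d" and "m \<ge> 1" and "b dvd d ^ m"
    using assms unfolding C5_def by meson
  then have "d dvd b"
    by simp
  also have "b dvd a"
    using a by simp
  also have "a dvd c ^ n"
    by fact
  finally have "d dvd c ^ n" .
  then have "d dvd c"
    using Gpr_dvd_powerD[OF d _ \<open>n \<ge> 1\<close>] by blast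
  then obtain c' where c': "c = d * c'" ..
  have "c' \<in> Gpr"
    using Gpr_dvd[OF c] c' by simp
  have "d ^ 2 dvd b * d"
    using \<open>d dvd b\<close> by (simp add: power2_eq_square mult_dvd_mono)
  have "b * d dvd d ^ (m + 1)"
    using mult_dvd_mono[OF \<open>b dvd d ^ m\<close> dvd_refl[of d]] by (simp add: mult.commute)
  have "relprime (b * d) c'"
    unfolding relprime_def
  proof clarify
    fix e assume "e dvd b * d" and "e dvd c'"
    then have "e \<in> Gpr"
      using Gpr_dvd[OF \<open>c' \<in> Gpr\<close>] by blast
    then have "e dvd d"
      using Gpr_dvd_powerD[OF _ dvd_trans[OF \<open>e dvd b * d\<close> \<open>b * d dvd d ^ (m + 1)\<close>]] by simp
    with \<open>e dvd c'\<close> have "e ^ 2 dvd c"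
      using c' by (simp add: power2_eq_square mult_dvd_mono mult.commute)
    then show "munit e"
      using Gpr_imp_Sqf[OF c] Sqf_square_dvd_imp_munit by blast
  qed
  moreover have "a = (b * d) * c'"
    using a c' by (simp add: ac_simps)
  ultimately show "\<exists>b c. c \<in> Gpr \<and> relprime b c \<and> a = b * c \<and>
      (\<exists>d\<in>Gpr. d ^ 2 dvd b \<and> (\<exists>n. n \<ge> 1 \<and> b dvd d ^ n))"
    using \<open>c' \<in> Gpr\<close> d \<open>d ^ 2 dvd b * d\<close> \<open>b * d dvd d ^ (m + 1)\<close> by fastforce
qed

end

theorem proposition4p1:
  assumes cancel: "\<And>a b c :: 'a::comm_monoid_mult. a * c = b * c \<Longrightarrow> a = b"
  shows
   \<comment> \<open>(a)\<close>
   "(C1 (Sqf::'a set) \<longrightarrow> C0 (Sqf::'a set)) \<and>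
    (C3 (Sqf::'a set) \<longrightarrow> C0 (Sqf::'a set)) \<and>
    (C2 (Sqf::'a set) \<longrightarrow> C1 (Sqf::'a set)) \<and>
    (C2 (Sqf::'a set) \<longrightarrow> C3 (Sqf::'a set)) \<and>
    (C2 (Sqf::'a set) \<longrightarrow> C5 (Sqf::'a set)) \<and>
    (C3 (Sqf::'a set) \<longrightarrow> C6 (Sqf::'a set)) \<and>
    (C1 (Gpr::'a set) \<longrightarrow> C0 (Gpr::'a set)) \<and>
    (C3 (Gpr::'a set) \<longrightarrow> C0 (Gpr::'a set)) \<and>
    (C2 (Gpr::'a set) \<longrightarrow> C1 (Gpr::'a set)) \<and>
    (C2 (Gpr::'a set) \<longrightarrow> C3 (Gpr::'a set)) \<and>
    (C2 (Gpr::'a set) \<longrightarrow> C5 (Gpr::'a set)) \<and>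
    (C3 (Gpr::'a set) \<longrightarrow> C6 (Gpr::'a set)) \<and>
    (C5 (Gpr::'a set) \<longrightarrow> C4 (Gpr::'a set)) \<and>
    (C4 (Gpr::'a set) \<longrightarrow> C4' (Gpr::'a set)) \<and>
    (C5 (Gpr::'a set) \<longrightarrow> C5' (Gpr::'a set)) \<and>
    (C0 (Gpr::'a set) \<longrightarrow> C0 (Sqf::'a set)) \<and>
    (C1 (Gpr::'a set) \<longrightarrow> C1 (Sqf::'a set)) \<and>
    (C2 (Gpr::'a set) \<longrightarrow> C2 (Sqf::'a set)) \<and>
    (C3 (Gpr::'a set) \<longrightarrow> C3 (Sqf::'a set)) \<and>
    (C4 (Gpr::'a set) \<longrightarrow> C4 (Sqf::'a set)) \<and>
    (C5 (Gpr::'a set) \<longrightarrow> C5 (Sqf::'a set)) \<and>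
    (C6 (Gpr::'a set) \<longrightarrow> C6 (Sqf::'a set))"
proof -
  from cancel have cancel': "\<forall>a b c :: 'a. a * c = b * c \<longrightarrow> a = b"
    by blast
  interpret sqf: divisor_closed_squarefree "Sqf :: 'a set"
    by (rule divisor_closed_squarefree_Sqf)
  interpret gpr: divisor_closed_squarefree "Gpr :: 'a set"
    by (rule divisor_closed_squarefree_Gpr[OF cancel'])
  have Gpr_Sqf: "(Gpr :: 'a set) \<subseteq> Sqf"
    using Gpr_imp_Sqf[OF cancel'] by blast
  show ?thesis
    by (intro conjI impI)
      (erule C1_imp_C0 C3_imp_C0 C3_imp_C6
        sqf.C2_imp_C1 sqf.C2_imp_C3 sqf.C2_imp_C5 gpr.C2_imp_C1 gpr.C2_imp_C3 gpr.C2_imp_C5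
        Gpr_C5_imp_C4[OF cancel'] Gpr_C4_imp_C4' Gpr_C5_imp_C5'
        C0_mono[OF Gpr_Sqf] C1_mono[OF Gpr_Sqf] C2_mono[OF Gpr_Sqf] C3_mono[OF Gpr_Sqf]
        C4_mono[OF Gpr_Sqf] C5_mono[OF Gpr_Sqf] C6_mono[OF Gpr_Sqf])+
qed

end
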